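(* Let $I\in\mathbb{I}_{m,n}$ and let $J\in\mathrm{Cov}(I)$. Then $\#J_0=\#I_0+1$. Consequently $\mathbb{I}_{m,n}$ is a graded poset with rank function $I\mapsto \#I_0$.
   Context: Fix a field $K$. For integers $m,n\ge1$, $G_{m,n}$ is the equioriented commutative $m\times n$ grid: the quiver with vertex set $\{(i,j):1\le i\le m,\ 1\le j\le n\}$ and arrows $(i,j)\to(i,j+1)$ and $(i,j)\to(i+1,j)$, bound by all commutativity relations. An interval of $G_{m,n}$ is a nonempty full subquiver $I$ which is connected (as an undirected graph) and convex (whenever $x,y\in I_0$ and there are paths $x\to z$ and $z\to y$ in $G_{m,n}$, then $z\in I_0$); $I_0$ denotes its vertex set. $\mathbb{I}_{m,n}$ is the set of intervals, partially ordered by $I\le J\iff I_0\subseteq J_0$. $\mathrm{Cov}(I)$ is the set of $J\in\mathbb{I}_{m,n}$ covering $I$, i.e. $I<J$ and there is no interval strictly between $I$ and $J$. *)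

theory Defs
  imports Main
begin

definition grid_vertices :: "nat \<Rightarrow> nat \<Rightarrow> (nat \<times> nat) set" where
  "grid_vertices m n = {(i, j). 1 \<le> i \<and> i \<le> m \<and> 1 \<le> j \<and> j \<le> n}"

definition grid_arrow :: "nat \<Rightarrow> nat \<Rightarrow> nat \<times> nat \<Rightarrow> nat \<times> nat \<Rightarrow> bool" where
  "grid_arrow m n x y \<longleftrightarrow> x \<in> grid_vertices m n \<and> y \<in> grid_vertices m n \<and>
     ((fst y = fst x \<and> snd y = snd x + 1) \<or> (fst y = fst x + 1 \<and> snd y = snd x))"

definition grid_path :: "nat \<Rightarrow> nat \<Rightarrow> nat \<times> nat \<Rightarrow> nat \<times> nat \<Rightarrow> bool" where
  "grid_path m n x y \<longleftrightarrow> x \<in> grid_vertices m n \<and> (grid_arrow m n)\<^sup>*\<^sup>* x y"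

definition full_connected :: "nat \<Rightarrow> nat \<Rightarrow> (nat \<times> nat) set \<Rightarrow> bool" where
  "full_connected m n S \<longleftrightarrow>
     (\<forall>x\<in>S. \<forall>y\<in>S. (\<lambda>a b. a \<in> S \<and> b \<in> S \<and> (grid_arrow m n a b \<or> grid_arrow m n b a))\<^sup>*\<^sup>* x y)"

definition convex_set :: "nat \<Rightarrow> nat \<Rightarrow> (nat \<times> nat) set \<Rightarrow> bool" where
  "convex_set m n S \<longleftrightarrow>
     (\<forall>x\<in>S. \<forall>y\<in>S. \<forall>z. grid_path m n x z \<and> grid_path m n z y \<longrightarrow> z \<in> S)"

text \<open>Intervals of G_{m,n}, identified with their vertex sets I_0 (a full
  subquiver is determined by its vertex set).\<close>
definition is_interval :: "nat \<Rightarrow> nat \<Rightarrow> (nat \<times> nat) set \<Rightarrow> bool" where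
  "is_interval m n S \<longleftrightarrow> S \<noteq> {} \<and> S \<subseteq> grid_vertices m n \<and>
     full_connected m n S \<and> convex_set m n S"

definition intervals :: "nat \<Rightarrow> nat \<Rightarrow> (nat \<times> nat) set set" where
  "intervals m n = {S. is_interval m n S}"

definition Cov :: "nat \<Rightarrow> nat \<Rightarrow> (nat \<times> nat) set \<Rightarrow> (nat \<times> nat) set set" where
  "Cov m n I = {J \<in> intervals m n. I \<subset> J \<and> \<not> (\<exists>K \<in> intervals m n. I \<subset> K \<and> K \<subset> J)}"

end

theory Submission
  imports Defs "HOL-Library.Product_Order"
begin

text \<open>Paths in the grid go exactly from a vertex to the vertices above it in the
  componentwise order, so an interval is a connected set containing every vertex between
  two of its elements. Given intervals \<open>I \<subset> J\<close>, connectivity of \<open>J\<close> yields a vertex of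
  \<open>J - I\<close> comparable to some vertex of \<open>I\<close>, say above it. A minimal vertex \<open>v\<close> of \<open>J - I\<close>
  lying above \<open>I\<close> is adjacent to \<open>I\<close> (its predecessor towards \<open>I\<close> lies in \<open>J\<close> by convexity,
  hence in \<open>I\<close> by minimality), and \<open>insert v I\<close> is again convex: no vertex of \<open>I\<close> lies above
  \<open>v\<close>, and a vertex strictly between \<open>I\<close> and \<open>v\<close> would contradict minimality. The case
  "below" follows by the half-turn symmetry of the grid.\<close>

lemma grid_arrow_iff:
  "grid_arrow m n a b \<longleftrightarrow> a \<in> grid_vertices m n \<and> b \<in> grid_vertices m n \<and>
     (b = (fst a, snd a + 1) \<or> b = (fst a + 1, snd a))"
  unfolding grid_arrow_def by (cases a; cases b) auto

lemma grid_arrow_less: "grid_arrow m n a b \<Longrightarrow> a < b"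
  by (auto simp: grid_arrow_iff less_prod_def less_eq_prod_def)

lemma grid_predecessorE:
  assumes "x \<in> grid_vertices m n" "y \<in> grid_vertices m n" "x < y"
  obtains p where "grid_arrow m n p y" "x \<le> p"
proof (cases "fst x < fst y")
  case True
  have "grid_arrow m n (fst y - 1, snd y) y" "x \<le> (fst y - 1, snd y)"
    using assms True by (auto simp: grid_arrow_iff grid_vertices_def less_prod_def less_eq_prod_def)
  then show ?thesis by (rule that)
next
  case False
  then have "snd x < snd y"
    using assms(3) by (auto simp: less_prod_def less_eq_prod_def)
  then have "grid_arrow m n (fst y, snd y - 1) y" "x \<le> (fst y, snd y - 1)"
    using assms False by (auto simp: grid_arrow_iff grid_vertices_def less_prod_def less_eq_prod_def)
  then show ?thesis by (rule that)
qed

lemma grid_path_iff: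
  "grid_path m n x y \<longleftrightarrow> x \<in> grid_vertices m n \<and> y \<in> grid_vertices m n \<and> x \<le> y"
proof
  assume "grid_path m n x y"
  then have "(grid_arrow m n)\<^sup>*\<^sup>* x y" and "x \<in> grid_vertices m n"
    by (simp_all add: grid_path_def)
  then show "x \<in> grid_vertices m n \<and> y \<in> grid_vertices m n \<and> x \<le> y"
    by (induction rule: rtranclp_induct)
      (auto dest: grid_arrow_less intro: order_trans less_imp_le simp: grid_arrow_def)
next
  assume "x \<in> grid_vertices m n \<and> y \<in> grid_vertices m n \<and> x \<le> y"
  then have "(grid_arrow m n)\<^sup>*\<^sup>* x y"
  proof (induction "fst y + snd y" arbitrary: y rule: less_induct)
    case less
    show ?case
    proof (cases "x = y")
      case False
      then obtain p where p: "grid_arrow m n p y" "x \<le> p"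
        using grid_predecessorE less.prems by (metis order_less_le)
      then have "fst p + snd p < fst y + snd y"
        by (auto simp: grid_arrow_iff)
      then have "(grid_arrow m n)\<^sup>*\<^sup>* x p"
        using less p by (simp add: grid_arrow_iff)
      then show ?thesis using p(1) by (rule rtranclp.rtrancl_into_rtrancl)
    qed simp
  qed
  then show "grid_path m n x y"
    using \<open>x \<in> grid_vertices m n \<and> _\<close> by (simp add: grid_path_def)
qed

lemma convex_set_iff:
  assumes "S \<subseteq> grid_vertices m n"
  shows "convex_set m n S \<longleftrightarrow>
    (\<forall>x\<in>S. \<forall>y\<in>S. \<forall>z\<in>grid_vertices m n. x \<le> z \<and> z \<le> y \<longrightarrow> z \<in> S)"
  using assms unfolding convex_set_def grid_path_iff by blast

lemma full_connected_insert:
  assumes "full_connected m n S" "p \<in> S" "grid_arrow m n p v \<or> grid_arrow m n v p"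
  shows "full_connected m n (insert v S)"
proof -
  let ?R = "\<lambda>T a b. a \<in> T \<and> b \<in> T \<and> (grid_arrow m n a b \<or> grid_arrow m n b a)"
  have "(?R (insert v S))\<^sup>*\<^sup>* p x \<and> (?R (insert v S))\<^sup>*\<^sup>* x p" if "x \<in> insert v S" for x
  proof (cases "x = v")
    case True
    with assms(2,3) show ?thesis by blast
  next
    case False
    then have "(?R S)\<^sup>*\<^sup>* p x \<and> (?R S)\<^sup>*\<^sup>* x p"
      using that assms(1,2) unfolding full_connected_def by auto
    then show ?thesis using mono_rtranclp[of "?R S" "?R (insert v S)"] by blast
  qed
  then show ?thesis unfolding full_connected_def by (meson rtranclp_trans)
qed

definition grid_flip :: "nat \<Rightarrow> nat \<Rightarrow> nat \<times> nat \<Rightarrow> nat \<times> nat" where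
  "grid_flip m n x = (Suc m - fst x, Suc n - snd x)"

lemma grid_flip_in_iff: "grid_flip m n x \<in> grid_vertices m n \<longleftrightarrow> x \<in> grid_vertices m n"
  by (auto simp: grid_flip_def grid_vertices_def)

lemma grid_flip_flip: "x \<in> grid_vertices m n \<Longrightarrow> grid_flip m n (grid_flip m n x) = x"
  by (auto simp: grid_flip_def grid_vertices_def)

lemma grid_flip_le_iff:
  "x \<in> grid_vertices m n \<Longrightarrow> y \<in> grid_vertices m n \<Longrightarrow>
    grid_flip m n x \<le> grid_flip m n y \<longleftrightarrow> y \<le> x"
  by (auto simp: grid_flip_def grid_vertices_def less_eq_prod_def)

lemma grid_arrow_flip: "grid_arrow m n (grid_flip m n a) (grid_flip m n b) \<longleftrightarrow> grid_arrow m n b a"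
  by (auto simp: grid_arrow_iff grid_flip_def grid_vertices_def prod_eq_iff)

lemma rtranclp_map:
  assumes "R\<^sup>*\<^sup>* x y" "\<And>a b. R a b \<Longrightarrow> S (f a) (f b)"
  shows "S\<^sup>*\<^sup>* (f x) (f y)"
  using assms(1) by induction (auto intro: rtranclp.rtrancl_into_rtrancl assms(2))

lemma is_interval_flip:
  assumes "is_interval m n S"
  shows "is_interval m n (grid_flip m n ` S)"
proof -
  let ?G = "grid_vertices m n" and ?f = "grid_flip m n"
  have SG: "S \<subseteq> ?G" using assms by (simp add: is_interval_def)
  have "full_connected m n (?f ` S)"
    unfolding full_connected_def
  proof (intro ballI)
    let ?R = "\<lambda>T a b. a \<in> T \<and> b \<in> T \<and> (grid_arrow m n a b \<or> grid_arrow m n b a)"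
    fix x' y' assume "x' \<in> ?f ` S" "y' \<in> ?f ` S"
    then obtain x y where "x \<in> S" "y \<in> S" "x' = ?f x" "y' = ?f y" by blast
    moreover have "(?R S)\<^sup>*\<^sup>* x y"
      using assms \<open>x \<in> S\<close> \<open>y \<in> S\<close> by (simp add: is_interval_def full_connected_def)
    then have "(?R (?f ` S))\<^sup>*\<^sup>* (?f x) (?f y)"
      by (rule rtranclp_map) (auto simp: grid_arrow_flip)
    ultimately show "(?R (?f ` S))\<^sup>*\<^sup>* x' y'" by simp
  qed
  moreover have "convex_set m n (?f ` S)"
  proof -
    have "z' \<in> ?f ` S"
      if "x \<in> S" "y \<in> S" "z' \<in> ?G" "?f x \<le> z'" "z' \<le> ?f y" for x y z'
    proof -
      have "?f z' \<in> ?G" "?f (?f z') = z'"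
        using \<open>z' \<in> ?G\<close> by (simp_all add: grid_flip_in_iff grid_flip_flip)
      then have "y \<le> ?f z'" "?f z' \<le> x"
        using that SG grid_flip_le_iff by (metis subsetD)+
      then have "?f z' \<in> S"
        using assms that \<open>?f z' \<in> ?G\<close> SG convex_set_iff unfolding is_interval_def by blast
      then show ?thesis using \<open>?f (?f z') = z'\<close> by force
    qed
    moreover have "?f ` S \<subseteq> ?G" using SG by (auto simp: grid_flip_in_iff)
    ultimately show ?thesis by (auto simp: convex_set_iff)
  qed
  ultimately show ?thesis
    using assms SG by (auto simp: is_interval_def grid_flip_in_iff)
qed

lemma finite_grid_vertices: "finite (grid_vertices m n)"
proof -
  have "grid_vertices m n \<subseteq> {1..m} \<times> {1..n}" by (auto simp: grid_vertices_def)
  then show ?thesis by (rule finite_subset) simp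
qed

lemma interval_insert_above:
  assumes I: "is_interval m n I" and J: "is_interval m n J" and IJ: "I \<subseteq> J"
    and "d \<in> J - I" "x\<^sub>0 \<in> I" "x\<^sub>0 \<le> d"
  obtains v where "v \<in> J - I" "is_interval m n (insert v I)"
proof -
  let ?G = "grid_vertices m n"
  have IG: "I \<subseteq> ?G" and JG: "J \<subseteq> ?G" using I J by (auto simp: is_interval_def)
  have convI: "z \<in> I" if "a \<in> I" "b \<in> I" "z \<in> ?G" "a \<le> z" "z \<le> b" for a b z
    using I IG convex_set_iff that unfolding is_interval_def by blast
  have convJ: "z \<in> J" if "a \<in> J" "b \<in> J" "z \<in> ?G" "a \<le> z" "z \<le> b" for a b z
    using J JG convex_set_iff that unfolding is_interval_def by blast
  define A where "A = {d \<in> J - I. \<exists>x\<in>I. x \<le> d}"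
  have "finite A" using JG finite_grid_vertices unfolding A_def by (auto intro: finite_subset)
  moreover have "d \<in> A" using assms unfolding A_def by blast
  ultimately obtain v where "v \<in> A" and v_min: "\<And>b. b \<in> A \<Longrightarrow> b \<le> v \<Longrightarrow> b = v"
    using finite_has_minimal by (metis empty_iff)
  then obtain x where vJ: "v \<in> J" and vI: "v \<notin> I" and xI: "x \<in> I" and x_le_v: "x \<le> v"
    unfolding A_def by blast
  moreover have "x \<noteq> v" using xI vI by blast
  ultimately have "x < v" by simp
  then obtain p where pv: "grid_arrow m n p v" and "x \<le> p"
    using grid_predecessorE xI vJ IG JG by blast
  have "p \<in> I"
  proof (rule ccontr)
    assume "p \<notin> I"
    have "p \<in> ?G" "p < v" using pv grid_arrow_less by (simp_all add: grid_arrow_def)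
    moreover from this have "p \<in> J"
      using convJ[of x v p] xI IJ vJ \<open>x \<le> p\<close> by auto
    ultimately have "p = v"
      using v_min[of p] xI \<open>x \<le> p\<close> \<open>p \<notin> I\<close> unfolding A_def by (simp add: less_imp_le) blast
    then show False using \<open>p < v\<close> by simp
  qed
  have "full_connected m n (insert v I)"
    using full_connected_insert I \<open>p \<in> I\<close> pv unfolding is_interval_def by blast
  moreover have box: "z \<in> insert v I"
    if a: "a \<in> insert v I" and b: "b \<in> insert v I" and "z \<in> ?G" "a \<le> z" "z \<le> b" for a b z
  proof -
    have v_not_below_I: "\<not> v \<le> c" if "c \<in> I" for c
      using convI[OF xI that] x_le_v vI vJ JG by blast
    consider "b \<in> I" | "b = v" using b by blast
    then show ?thesis
    proof cases
      case 1
      then have "a \<in> I" using a v_not_below_I[OF 1] \<open>a \<le> z\<close> \<open>z \<le> b\<close> by (auto dest: order_trans)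
      then show ?thesis using convI 1 that by blast
    next
      case 2
      show ?thesis
      proof (cases "a = v")
        case True
        then show ?thesis using 2 \<open>a \<le> z\<close> \<open>z \<le> b\<close> by simp
      next
        case False
        then have "a \<in> I" using a by blast
        then have "z \<in> J" using convJ[of a v z] IJ vJ 2 that by blast
        then show ?thesis
          using v_min[of z] \<open>a \<in> I\<close> 2 that unfolding A_def by blast
      qed
    qed
  qed
  have vI_G: "insert v I \<subseteq> ?G" using vJ JG IG by blast
  then have "convex_set m n (insert v I)"
    unfolding convex_set_iff[OF vI_G] using box by blast
  ultimately have "is_interval m n (insert v I)"
    using vI_G unfolding is_interval_def by blast
  then show ?thesis using that vJ vI by blast
qed

lemma interval_insert_below:
  assumes I: "is_interval m n I" and J: "is_interval m n J" and IJ: "I \<subseteq> J"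
    and d: "d \<in> J - I" and y: "y \<in> I" "d \<le> y"
  obtains v where "v \<in> J - I" "is_interval m n (insert v I)"
proof -
  let ?G = "grid_vertices m n" and ?f = "grid_flip m n"
  have IG: "I \<subseteq> ?G" and JG: "J \<subseteq> ?G" using I J by (auto simp: is_interval_def)
  have flip_image_flip: "?f ` ?f ` S = S" if "S \<subseteq> ?G" for S
    using that by (force simp: image_image grid_flip_flip)
  have "?f d \<notin> ?f ` I"
    using d flip_image_flip[OF IG] JG by (metis DiffE grid_flip_flip imageI subsetD)
  moreover have "?f y \<le> ?f d"
    using y d IG JG grid_flip_le_iff by blast
  ultimately obtain v' where v': "v' \<in> ?f ` J - ?f ` I" "is_interval m n (insert v' (?f ` I))"
    using interval_insert_above[OF is_interval_flip[OF I] is_interval_flip[OF J]] IJ d y by blast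
  then obtain v where "v \<in> J" "v' = ?f v" by blast
  then have "v \<notin> I" using v' by blast
  moreover have "?f ` insert v' (?f ` I) = insert v I"
    using flip_image_flip[OF IG] \<open>v \<in> J\<close> \<open>v' = ?f v\<close> JG by (auto simp: grid_flip_flip)
  ultimately show ?thesis
    using that[of v] \<open>v \<in> J\<close> is_interval_flip[OF v'(2)] by simp
qed

lemma rtranclp_leaves_set:
  assumes "R\<^sup>*\<^sup>* a b" "a \<in> S" "b \<notin> S"
  obtains u w where "R u w" "u \<in> S" "w \<notin> S"
  using assms by (induction rule: rtranclp_induct) blast+

lemma interval_insert_between:
  assumes I: "is_interval m n I" and J: "is_interval m n J" and IJ: "I \<subset> J"
  obtains v where "v \<in> J - I" "is_interval m n (insert v I)"
proof -
  obtain x d where "x \<in> I" "d \<in> J - I" using I IJ by (auto simp: is_interval_def)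
  then have "(\<lambda>a b. a \<in> J \<and> b \<in> J \<and> (grid_arrow m n a b \<or> grid_arrow m n b a))\<^sup>*\<^sup>* x d"
    using J IJ unfolding is_interval_def full_connected_def by blast
  then obtain u w where "u \<in> J \<and> w \<in> J \<and> (grid_arrow m n u w \<or> grid_arrow m n w u)"
      and "u \<in> I" "w \<notin> I"
    by (rule rtranclp_leaves_set) (use \<open>x \<in> I\<close> \<open>d \<in> J - I\<close> in auto)
  then consider "w \<in> J - I" "u \<le> w" | "w \<in> J - I" "w \<le> u"
    using grid_arrow_less less_imp_le by blast
  then show ?thesis
    using interval_insert_above[OF I J] interval_insert_below[OF I J] IJ \<open>u \<in> I\<close> that
    by (cases; blast)
qed

lemma is_interval_singleton: "x \<in> grid_vertices m n \<Longrightarrow> is_interval m n {x}"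
  unfolding is_interval_def full_connected_def convex_set_def grid_path_iff by auto

theorem mainTheorem2:
  fixes m n :: nat
  assumes "1 \<le> m" and "1 \<le> n"
  shows "(\<forall>I \<in> intervals m n. \<forall>J \<in> Cov m n I. card J = card I + 1)
    \<and> (\<forall>I \<in> intervals m n. (\<not> (\<exists>K \<in> intervals m n. K \<subset> I)) \<longrightarrow> card I = 1)"
proof (intro conjI ballI impI)
  fix I J assume "I \<in> intervals m n" "J \<in> Cov m n I"
  then have I: "is_interval m n I" and J: "is_interval m n J" and "I \<subset> J"
    and no_between: "\<not> (\<exists>K \<in> intervals m n. I \<subset> K \<and> K \<subset> J)"
    by (auto simp: Cov_def intervals_def)
  obtain v where v: "v \<in> J - I" "is_interval m n (insert v I)"
    using interval_insert_between[OF I J \<open>I \<subset> J\<close>] by blast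
  moreover have "I \<subset> insert v I" "insert v I \<subseteq> J" using v \<open>I \<subset> J\<close> by auto
  ultimately have "J = insert v I"
    using no_between unfolding intervals_def by blast
  moreover have "finite I"
    using I finite_grid_vertices by (auto simp: is_interval_def intro: finite_subset)
  ultimately show "card J = card I + 1" using v by simp
next
  fix I assume "I \<in> intervals m n" and minimal: "\<not> (\<exists>K \<in> intervals m n. K \<subset> I)"
  then obtain x where "x \<in> I" "I \<subseteq> grid_vertices m n"
    by (auto simp: intervals_def is_interval_def)
  then have "{x} \<in> intervals m n" by (auto simp: intervals_def intro: is_interval_singleton)
  then have "I = {x}" using minimal \<open>x \<in> I\<close> by blast
  then show "card I = 1" by simp
qed

end
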